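(* Let $G=(\hat X,\hat\Sigma,\delta,\hat x_0,\hat x_m)$ be a bi-fuzzy automaton over a crisp state set with $n$ elements, with generated language $L_G$ and marked language $L_{G,m}$. Then for every string $s\in\hat\Sigma^*$ and every event $\sigma\in\hat\Sigma$, $$L_{G,m}(s\sigma)\sqsubseteq L_G(s\sigma)\sqsubseteq L_G(s).$$
   Context: $NCFD$ is the set of normal convex type-1 fuzzy sets $\mu:[0,1]\to[0,1]$ ($\max_u\mu(u)=1$, and $\mu(u_j)\ge\min\{\mu(u_i),\mu(u_k)\}$ for $u_i\le u_j\le u_k$); $a/u_0$ denotes the fuzzy set with value $a$ at $u_0$ and $0$ elsewhere. Operations: $(\mu_1\sqcup\mu_2)(v)=\sup\{\min(\mu_1(u),\mu_2(w)):\max(u,w)=v\}$, $(\mu_1\sqcap\mu_2)(v)=\sup\{\min(\mu_1(u),\mu_2(w)):\min(u,w)=v\}$; $\mu_1\sqsubseteq\mu_2$ iff $\mu_1\sqcap\mu_2=\mu_1$. For matrices $R$ ($p\times n$) and $S$ ($n\times k$) with entries in $NCFD$, $(R\odot S)(x,z)=\bigsqcup_{y}[R(x,y)\sqcap S(y,z)]$. A bi-fuzzy automaton $G=(\hat X,\hat\Sigma,\delta,\hat x_0,\hat x_m)$ over a crisp state set $X$ with $|X|=n$ consists of: bi-fuzzy states, which are row vectors of length $n$ with entries in $NCFD$; a set $\hat\Sigma$ of events, each event $\sigma$ being an $n\times n$ matrix with entries in $NCFD$; transition function $\delta(\hat x,\sigma)=\hat x\odot\sigma$; an initial bi-fuzzy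 state $\hat x_0$ and a final bi-fuzzy state $\hat x_m$ (row vectors in $NCFD^n$). Its generated and marked languages $L_G,L_{G,m}:\hat\Sigma^*\to NCFD$ are given by $L_G(\epsilon)=L_{G,m}(\epsilon)=1/1$ and, for $s=\sigma_1\cdots\sigma_k$ with $k>0$, $L_G(s)=\hat x_0\odot\sigma_1\odot\cdots\odot\sigma_k\odot A_n^T$ and $L_{G,m}(s)=\hat x_0\odot\sigma_1\odot\cdots\odot\sigma_k\odot\hat x_m^T$, where $A_n=[1/1,\dots,1/1]$ (length $n$) and $T$ is transpose. *)

theory Defs
  imports Complex_Main
begin

text \<open>Type-1 fuzzy sets on [0,1], represented as real functions that vanish outside [0,1].\<close>
type_synonym fuzzy = "real \<Rightarrow> real"

definition NCFD :: "fuzzy \<Rightarrow> bool" where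
  "NCFD \<mu> \<longleftrightarrow>
     (\<forall>u. u \<notin> {0..1} \<longrightarrow> \<mu> u = 0) \<and>
     (\<forall>u\<in>{0..1}. 0 \<le> \<mu> u \<and> \<mu> u \<le> 1) \<and>
     (\<exists>u\<in>{0..1}. \<mu> u = 1) \<and>
     (\<forall>ui\<in>{0..1}. \<forall>uj\<in>{0..1}. \<forall>uk\<in>{0..1}.
        ui \<le> uj \<and> uj \<le> uk \<longrightarrow> \<mu> uj \<ge> min (\<mu> ui) (\<mu> uk))"

definition fpt :: "real \<Rightarrow> real \<Rightarrow> fuzzy" where
  "fpt a u0 = (\<lambda>u. if u = u0 then a else 0)"

definition fjoin :: "fuzzy \<Rightarrow> fuzzy \<Rightarrow> fuzzy" where
  "fjoin \<mu>1 \<mu>2 = (\<lambda>v. if v \<in> {0..1} then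
      Sup {min (\<mu>1 u) (\<mu>2 w) | u w. u \<in> {0..1} \<and> w \<in> {0..1} \<and> max u w = v}
    else 0)"

definition fmeet :: "fuzzy \<Rightarrow> fuzzy \<Rightarrow> fuzzy" where
  "fmeet \<mu>1 \<mu>2 = (\<lambda>v. if v \<in> {0..1} then
      Sup {min (\<mu>1 u) (\<mu>2 w) | u w. u \<in> {0..1} \<and> w \<in> {0..1} \<and> min u w = v}
    else 0)"

definition fsub :: "fuzzy \<Rightarrow> fuzzy \<Rightarrow> bool" where
  "fsub \<mu>1 \<mu>2 \<longleftrightarrow> fmeet \<mu>1 \<mu>2 = \<mu>1"

text \<open>Iterated join over indices 0..n-1 (for n >= 1).\<close>
definition bigjoin :: "nat \<Rightarrow> (nat \<Rightarrow> fuzzy) \<Rightarrow> fuzzy" where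
  "bigjoin n f = foldl (\<lambda>acc y. fjoin acc (f y)) (f 0) [1..<n]"

text \<open>Row vectors: nat => fuzzy (indices < n); matrices: nat => nat => fuzzy.\<close>
type_synonym fvec = "nat \<Rightarrow> fuzzy"
type_synonym fmat = "nat \<Rightarrow> nat \<Rightarrow> fuzzy"

definition vecmat :: "nat \<Rightarrow> fvec \<Rightarrow> fmat \<Rightarrow> fvec" where
  "vecmat n x M = (\<lambda>z. bigjoin n (\<lambda>y. fmeet (x y) (M y z)))"

definition vecdot :: "nat \<Rightarrow> fvec \<Rightarrow> fvec \<Rightarrow> fuzzy" where
  "vecdot n x c = bigjoin n (\<lambda>y. fmeet (x y) (c y))"

definition run :: "nat \<Rightarrow> fvec \<Rightarrow> fmat list \<Rightarrow> fvec" where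
  "run n x s = foldl (vecmat n) x s"

definition bifuzzy_automaton :: "nat \<Rightarrow> fmat set \<Rightarrow> fvec \<Rightarrow> fvec \<Rightarrow> bool" where
  "bifuzzy_automaton n Ev x0 xm \<longleftrightarrow> 0 < n \<and>
     (\<forall>i<n. NCFD (x0 i)) \<and> (\<forall>i<n. NCFD (xm i)) \<and>
     (\<forall>\<sigma>\<in>Ev. \<forall>i<n. \<forall>j<n. NCFD (\<sigma> i j))"

definition LG :: "nat \<Rightarrow> fvec \<Rightarrow> fmat list \<Rightarrow> fuzzy" where
  "LG n x0 s = (if s = [] then fpt 1 1 else vecdot n (run n x0 s) (\<lambda>_. fpt 1 1))"

definition LGm :: "nat \<Rightarrow> fvec \<Rightarrow> fvec \<Rightarrow> fmat list \<Rightarrow> fuzzy" where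
  "LGm n x0 xm s = (if s = [] then fpt 1 1 else vecdot n (run n x0 s) xm)"

end

theory Submission
  imports Defs
begin

text \<open>A normal convex fuzzy set on [0,1] with peak m is the minimum of a nondecreasing function
equal to 1 on [m,1] and a nonincreasing function equal to 1 on [0,m]. Evaluating the suprema shows
that \<open>\<sqcap>\<close> takes the maximum of the nondecreasing parts and the minimum of the nonincreasing parts,
and \<open>\<sqcup>\<close> the reverse. Hence \<open>\<sqsubseteq>\<close> is the componentwise order of these envelopes: \<open>f \<sqcap> g \<sqsubseteq> f\<close>,
iterated \<open>\<sqcup>\<close> is a least upper bound, and 1/1 is a top element and a unit for \<open>\<sqcap>\<close>. Thus \<open>L\<^sub>G(s)\<close>
is the join of the entries of the state reached by s. Every entry of the next state is a join of
meets with these entries, and \<open>L\<^sub>G\<^sub>,\<^sub>m\<close> meets them with the final state instead of 1/1; both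
inequalities follow.\<close>

definition convex_split :: "fuzzy \<Rightarrow> fuzzy \<Rightarrow> fuzzy \<Rightarrow> real \<Rightarrow> bool" where
  "convex_split f A B m \<longleftrightarrow> m \<in> {0..1} \<and> (\<forall>u. u \<notin> {0..1} \<longrightarrow> f u = 0) \<and>
     (\<forall>v\<in>{0..1}. f v = min (A v) (B v) \<and> A v \<in> {0..1} \<and> B v \<in> {0..1}) \<and>
     (\<forall>v\<in>{m..1}. A v = 1) \<and> (\<forall>v\<in>{0..m}. B v = 1) \<and>
     mono_on {0..1} A \<and> antimono_on {0..1} B"

lemma convex_splitI:
  assumes "m \<in> {0..1}" "\<And>u. u \<notin> {0..1} \<Longrightarrow> f u = 0"
    and "\<And>v. v \<in> {0..1} \<Longrightarrow> f v = min (A v) (B v)"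
    and "\<And>v. v \<in> {0..1} \<Longrightarrow> A v \<in> {0..1}" "\<And>v. v \<in> {0..1} \<Longrightarrow> B v \<in> {0..1}"
    and "\<And>v. v \<in> {m..1} \<Longrightarrow> A v = 1" "\<And>v. v \<in> {0..m} \<Longrightarrow> B v = 1"
    and "mono_on {0..1} A" "antimono_on {0..1} B"
  shows "convex_split f A B m"
  using assms unfolding convex_split_def by blast

lemma convex_splitD:
  assumes "convex_split f A B m"
  shows "m \<in> {0..1}" "u \<notin> {0..1} \<Longrightarrow> f u = 0"
    and "v \<in> {0..1} \<Longrightarrow> f v = min (A v) (B v)"
    and "v \<in> {0..1} \<Longrightarrow> A v \<in> {0..1}" "v \<in> {0..1} \<Longrightarrow> B v \<in> {0..1}"
    and "v \<in> {m..1} \<Longrightarrow> A v = 1" "v \<in> {0..m} \<Longrightarrow> B v = 1"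
  using assms unfolding convex_split_def by auto

lemma convex_split_monotone:
  assumes "convex_split f A B m" "u \<in> {0..1}" "v \<in> {0..1}" "u \<le> v"
  shows "A u \<le> A v" "B v \<le> B u"
  using assms unfolding convex_split_def monotone_on_def by auto

text \<open>The reflection \<open>u \<mapsto> 1 - u\<close> exchanges \<open>\<sqcup>\<close> with \<open>\<sqcap>\<close> and the two parts of a split, so facts
about joins and right envelopes follow from those about meets and left envelopes.\<close>

definition freflect :: "fuzzy \<Rightarrow> fuzzy" where
  "freflect f = (\<lambda>u. f (1 - u))"

lemma convex_split_freflect:
  assumes "convex_split f A B m"
  shows "convex_split (freflect f) (freflect B) (freflect A) (1 - m)"
  using assms unfolding convex_split_def freflect_def monotone_on_def
  by (auto simp: min.commute)

lemma NCFD_convex_split_at_peak: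
  assumes f: "NCFD f" and m: "m \<in> {0..1}" "f m = 1"
  shows "convex_split f (\<lambda>v. if v \<le> m then f v else 1) (\<lambda>v. if m \<le> v then f v else 1) m"
proof -
  have range: "v \<in> {0..1} \<Longrightarrow> f v \<in> {0..1}" for v using f unfolding NCFD_def by auto
  have zero: "u \<notin> {0..1} \<Longrightarrow> f u = 0" for u using f unfolding NCFD_def by auto
  have convex: "min (f u) (f w) \<le> f v" if "u \<in> {0..1}" "w \<in> {0..1}" "u \<le> v" "v \<le> w" for u v w
    using f that unfolding NCFD_def by auto
  show ?thesis
  proof (rule convex_splitI)
    show "mono_on {0..1} (\<lambda>v. if v \<le> m then f v else 1)"
    proof (rule mono_onI)
      fix u v :: real assume "u \<in> {0..1}" "v \<in> {0..1}" "u \<le> v"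
      then show "(if u \<le> m then f u else 1) \<le> (if v \<le> m then f v else 1)"
        using convex[of u m v] range[of u] m by auto
    qed
    show "antimono_on {0..1} (\<lambda>v. if m \<le> v then f v else 1)"
    proof (rule monotone_onI)
      fix u v :: real assume "u \<in> {0..1}" "v \<in> {0..1}" "u \<le> v"
      then show "(if m \<le> v then f v else 1) \<le> (if m \<le> u then f u else 1)"
        using convex[of m v u] range[of v] m by auto
    qed
  qed (use m range zero in \<open>auto simp: min_def intro: order.antisym\<close>)
qed

lemma NCFD_iff_convex_split: "NCFD f \<longleftrightarrow> (\<exists>A B m. convex_split f A B m)"
proof
  assume "NCFD f"
  then obtain m where "m \<in> {0..1}" "f m = 1" unfolding NCFD_def by blast
  with NCFD_convex_split_at_peak[OF \<open>NCFD f\<close>] show "\<exists>A B m. convex_split f A B m" by blast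
next
  assume "\<exists>A B m. convex_split f A B m"
  then obtain A B m where s: "convex_split f A B m" by blast
  have "min (f u) (f w) \<le> f v"
    if "u \<in> {0..1}" "v \<in> {0..1}" "w \<in> {0..1}" "u \<le> v" "v \<le> w" for u v w
    using convex_split_monotone[OF s, of u v] convex_split_monotone[OF s, of v w] that
      convex_splitD(3)[OF s] by (auto simp: min_def)
  moreover have "\<exists>u\<in>{0..1}. f u = 1"
    using convex_splitD(1,3,6,7)[OF s] by (intro bexI[of _ m]) auto
  ultimately show "NCFD f" using s unfolding convex_split_def NCFD_def by auto
qed

text \<open>By \<open>convex_split_lenv\<close> and \<open>convex_split_renv\<close> these envelopes are the two parts of every
split of f, so the order \<open>fle\<close> below does not depend on a chosen split.\<close>

definition lenv :: "fuzzy \<Rightarrow> fuzzy" where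
  "lenv f v = (if \<exists>u. 0 \<le> u \<and> u \<le> v \<and> f u = 1 then 1 else f v)"

definition renv :: "fuzzy \<Rightarrow> fuzzy" where
  "renv f v = (if \<exists>u. v \<le> u \<and> u \<le> 1 \<and> f u = 1 then 1 else f v)"

lemma renv_eq_lenv_freflect: "renv f v = lenv (freflect f) (1 - v)"
proof -
  have ex: "(\<exists>u. v \<le> u \<and> u \<le> 1 \<and> f u = 1) \<longleftrightarrow> (\<exists>u. 0 \<le> u \<and> u \<le> 1 - v \<and> f (1 - u) = 1)"
  proof
    assume "\<exists>u. v \<le> u \<and> u \<le> 1 \<and> f u = 1"
    then obtain u where "v \<le> u" "u \<le> 1" "f u = 1" by blast
    then show "\<exists>u. 0 \<le> u \<and> u \<le> 1 - v \<and> f (1 - u) = 1" by (intro exI[of _ "1 - u"]) auto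
  next
    assume "\<exists>u. 0 \<le> u \<and> u \<le> 1 - v \<and> f (1 - u) = 1"
    then obtain u where "0 \<le> u" "u \<le> 1 - v" "f (1 - u) = 1" by blast
    then show "\<exists>u. v \<le> u \<and> u \<le> 1 \<and> f u = 1" by (intro exI[of _ "1 - u"]) auto
  qed
  show ?thesis unfolding renv_def lenv_def freflect_def using ex by auto
qed

lemma convex_split_lenv:
  assumes s: "convex_split f A B m" and v: "v \<in> {0..1}"
  shows "lenv f v = A v"
proof (cases "\<exists>u. 0 \<le> u \<and> u \<le> v \<and> f u = 1")
  case True
  then obtain u where u: "0 \<le> u" "u \<le> v" "f u = 1" by blast
  have uv: "u \<in> {0..1}" "v \<in> {0..1}" "u \<le> v" using u v by auto
  have "A u = 1" using u convex_splitD(3-5)[OF s uv(1)] by (auto simp: min_def split: if_splits)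
  then have "A v = 1" using convex_split_monotone(1)[OF s uv] convex_splitD(4)[OF s v] by auto
  then show ?thesis using True unfolding lenv_def by simp
next
  case False
  have "m \<in> {0..1}" "f m = 1" using convex_splitD(1,3,6,7)[OF s] by auto
  then have "\<not> m \<le> v" using False by auto
  then have "v \<in> {0..m}" using v by auto
  then have "f v = A v" using convex_splitD(3,4)[OF s v] convex_splitD(7)[OF s] by auto
  with False show ?thesis unfolding lenv_def by (simp only: if_False)
qed

lemma convex_split_renv:
  assumes "convex_split f A B m" and "v \<in> {0..1}"
  shows "renv f v = B v"
  using convex_split_lenv[OF convex_split_freflect[OF assms(1)], of "1 - v"] assms(2)
  by (simp add: renv_eq_lenv_freflect freflect_def)

lemma NCFD_convex_split_envelopes:
  assumes "NCFD f" obtains m where "convex_split f (lenv f) (renv f) m"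
proof -
  obtain A B m where s: "convex_split f A B m" using assms NCFD_iff_convex_split by blast
  have "convex_split f (lenv f) (renv f) m"
    using s convex_split_lenv[OF s] convex_split_renv[OF s]
    unfolding convex_split_def monotone_on_def by auto
  then show thesis by (rule that)
qed

lemma convex_split_renv_attained:
  assumes s: "convex_split g C D q" and v: "v \<in> {0..1}"
  shows "\<exists>w\<in>{0..1}. v \<le> w \<and> g w = D v"
proof (cases "v \<le> q")
  case True
  then have "g q = 1" "D v = 1" using convex_splitD(1,3,6,7)[OF s] v by auto
  then show ?thesis using convex_splitD(1)[OF s] True by auto
next
  case False
  then have "g v = D v" using convex_splitD(3,5)[OF s v] convex_splitD(6)[OF s] v by auto
  then show ?thesis using v by auto
qed

lemma convex_split_le_renv:
  assumes s: "convex_split g C D q" and "v \<in> {0..1}" "w \<in> {0..1}" "v \<le> w"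
  shows "g w \<le> D v"
proof -
  have "g w \<le> D w" using convex_splitD(3,4)[OF s assms(3)] by simp
  also have "D w \<le> D v" using convex_split_monotone[OF assms] by simp
  finally show ?thesis .
qed

text \<open>If \<open>min u w = v\<close>, one argument is v and the other lies right of v, where f and g are bounded
by \<open>B v\<close> and \<open>D v\<close>; both bounds are attained, so the supremum is a maximum.\<close>

lemma fmeet_convex_split_eq:
  assumes f: "convex_split f A B p" and g: "convex_split g C D q" and v: "v \<in> {0..1}"
  shows "fmeet f g v = max (min (f v) (D v)) (min (B v) (g v))"
proof -
  let ?S = "{min (f u) (g w) |u w. u \<in> {0..1} \<and> w \<in> {0..1} \<and> min u w = v}"
  obtain w where w: "w \<in> {0..1}" "v \<le> w" "g w = D v"
    using convex_split_renv_attained[OF g v] by blast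
  obtain u where u: "u \<in> {0..1}" "v \<le> u" "f u = B v"
    using convex_split_renv_attained[OF f v] by blast
  have "min (f v) (D v) \<in> ?S"
    by (rule CollectI, rule exI[of _ v], rule exI[of _ w]) (use v w in \<open>auto simp: min_absorb1\<close>)
  moreover have "min (B v) (g v) \<in> ?S"
    by (rule CollectI, rule exI[of _ u], rule exI[of _ v]) (use v u in \<open>auto simp: min_absorb2\<close>)
  ultimately have max_in: "max (min (f v) (D v)) (min (B v) (g v)) \<in> ?S"
    by (simp add: max_def)
  have bound: "x \<le> max (min (f v) (D v)) (min (B v) (g v))" if x_in: "x \<in> ?S" for x
  proof -
    obtain u' w' where x: "x = min (f u') (g w')" "u' \<in> {0..1}" "w' \<in> {0..1}" "min u' w' = v"
      using x_in by blast
    show ?thesis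
    proof (cases "u' \<le> w'")
      case True
      then have "g w' \<le> D v" using convex_split_le_renv[OF g] x by (auto simp: min_def)
      then show ?thesis using x True by (auto simp: min_def)
    next
      case False
      then have "f u' \<le> B v" using convex_split_le_renv[OF f] x by (auto simp: min_def)
      then show ?thesis using x False by (auto simp: min_def)
    qed
  qed
  have "Sup ?S = max (min (f v) (D v)) (min (B v) (g v))"
    using max_in bound by (intro cSup_eq_maximum) auto
  then show ?thesis using v unfolding fmeet_def by simp
qed

lemma fmeet_convex_split:
  assumes f: "convex_split f A B p" and g: "convex_split g C D q"
  shows "convex_split (fmeet f g) (\<lambda>v. max (A v) (C v)) (\<lambda>v. min (B v) (D v)) (min p q)"
proof (rule convex_splitI)
  show "min p q \<in> {0..1}" using convex_splitD(1)[OF f] convex_splitD(1)[OF g] by auto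
  show "fmeet f g u = 0" if "u \<notin> {0..1}" for u
    using that unfolding fmeet_def by auto
  fix v :: real assume v: "v \<in> {0..1}"
  show "fmeet f g v = min (max (A v) (C v)) (min (B v) (D v))"
    unfolding fmeet_convex_split_eq[OF f g v] convex_splitD(3)[OF f v] convex_splitD(3)[OF g v]
    by (auto simp: min_def max_def)
  show "max (A v) (C v) \<in> {0..1}" "min (B v) (D v) \<in> {0..1}"
    using convex_splitD(4,5)[OF f v] convex_splitD(4,5)[OF g v] by auto
next
  fix v :: real assume v: "v \<in> {min p q..1}"
  then have "v \<in> {0..1}" using convex_splitD(1)[OF f] convex_splitD(1)[OF g] by auto
  then have "A v \<le> 1" "C v \<le> 1" using convex_splitD(4)[OF f] convex_splitD(4)[OF g] by auto
  moreover have "A v = 1 \<or> C v = 1"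
    using v convex_splitD(6)[OF f] convex_splitD(6)[OF g] by (auto simp: min_def split: if_splits)
  ultimately show "max (A v) (C v) = 1" by (auto simp: max_def)
next
  fix v :: real assume "v \<in> {0..min p q}"
  then show "min (B v) (D v) = 1"
    using convex_splitD(7)[OF f] convex_splitD(7)[OF g] by auto
next
  show "mono_on {0..1} (\<lambda>v. max (A v) (C v))" "antimono_on {0..1} (\<lambda>v. min (B v) (D v))"
    using convex_split_monotone[OF f] convex_split_monotone[OF g]
    by (auto intro!: monotone_onI max.mono min.mono)
qed

lemma fjoin_eq_freflect_fmeet: "fjoin f g = freflect (fmeet (freflect f) (freflect g))"
proof (rule ext)
  fix v :: real
  have "{min (f u) (g w) |u w. u \<in> {0..1} \<and> w \<in> {0..1} \<and> max u w = v} =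
    {min (freflect f u) (freflect g w) |u w. u \<in> {0..1} \<and> w \<in> {0..1} \<and> min u w = 1 - v}"
    (is "?L = ?R")
  proof
    show "?L \<subseteq> ?R"
    proof
      fix x assume "x \<in> ?L"
      then obtain u w where uw: "x = min (f u) (g w)" "u \<in> {0..1}" "w \<in> {0..1}" "max u w = v"
        by blast
      have "min (1 - u) (1 - w) = 1 - v" using uw(4) by (auto simp: min_def max_def split: if_splits)
      then show "x \<in> ?R" unfolding freflect_def
        by - (rule CollectI, rule exI[of _ "1 - u"], rule exI[of _ "1 - w"], use uw in auto)
    qed
    show "?R \<subseteq> ?L"
    proof
      fix x assume "x \<in> ?R"
      then obtain u w where uw: "x = min (f (1 - u)) (g (1 - w))" "u \<in> {0..1}" "w \<in> {0..1}"
          "min u w = 1 - v"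
        unfolding freflect_def by blast
      have "max (1 - u) (1 - w) = v" using uw(4) by (auto simp: min_def max_def split: if_splits)
      then show "x \<in> ?L"
        by - (rule CollectI, rule exI[of _ "1 - u"], rule exI[of _ "1 - w"], use uw in auto)
    qed
  qed
  then show "fjoin f g v = freflect (fmeet (freflect f) (freflect g)) v"
    unfolding fjoin_def fmeet_def freflect_def by auto
qed

lemma fjoin_convex_split:
  assumes f: "convex_split f A B p" and g: "convex_split g C D q"
  shows "convex_split (fjoin f g) (\<lambda>v. min (A v) (C v)) (\<lambda>v. max (B v) (D v)) (max p q)"
proof -
  have "1 - min (1 - p) (1 - q) = max p q" by (simp add: min_def max_def)
  then show ?thesis
    using convex_split_freflect[OF fmeet_convex_split[OF convex_split_freflect[OF f] convex_split_freflect[OF g]]]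
    unfolding fjoin_eq_freflect_fmeet by (simp add: freflect_def)
qed

lemma NCFD_fmeet: "NCFD f \<Longrightarrow> NCFD g \<Longrightarrow> NCFD (fmeet f g)"
  unfolding NCFD_iff_convex_split using fmeet_convex_split by blast

lemma NCFD_fjoin: "NCFD f \<Longrightarrow> NCFD g \<Longrightarrow> NCFD (fjoin f g)"
  unfolding NCFD_iff_convex_split using fjoin_convex_split by blast

lemma envelopes_fmeet:
  assumes "NCFD f" "NCFD g" "v \<in> {0..1}"
  shows "lenv (fmeet f g) v = max (lenv f v) (lenv g v)"
    and "renv (fmeet f g) v = min (renv f v) (renv g v)"
proof -
  obtain p q where "convex_split f (lenv f) (renv f) p" "convex_split g (lenv g) (renv g) q"
    using assms(1,2) NCFD_convex_split_envelopes by metis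
  note s = fmeet_convex_split[OF this]
  show "lenv (fmeet f g) v = max (lenv f v) (lenv g v)" using convex_split_lenv[OF s assms(3)] .
  show "renv (fmeet f g) v = min (renv f v) (renv g v)" using convex_split_renv[OF s assms(3)] .
qed

lemma envelopes_fjoin:
  assumes "NCFD f" "NCFD g" "v \<in> {0..1}"
  shows "lenv (fjoin f g) v = min (lenv f v) (lenv g v)"
    and "renv (fjoin f g) v = max (renv f v) (renv g v)"
proof -
  obtain p q where "convex_split f (lenv f) (renv f) p" "convex_split g (lenv g) (renv g) q"
    using assms(1,2) NCFD_convex_split_envelopes by metis
  note s = fjoin_convex_split[OF this]
  show "lenv (fjoin f g) v = min (lenv f v) (lenv g v)" using convex_split_lenv[OF s assms(3)] .
  show "renv (fjoin f g) v = max (renv f v) (renv g v)" using convex_split_renv[OF s assms(3)] .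
qed

lemma convex_split_fpt_one: "convex_split (fpt 1 1) (\<lambda>v. if v = 1 then 1 else 0) (\<lambda>v. 1) 1"
  by (rule convex_splitI) (auto simp: fpt_def intro!: monotone_onI)

lemma NCFD_fpt_one: "NCFD (fpt 1 1)"
  unfolding NCFD_iff_convex_split using convex_split_fpt_one by blast

lemma fmeet_fpt_one_right:
  assumes "NCFD f" shows "fmeet f (fpt 1 1) = f"
proof (rule ext)
  fix v :: real
  obtain A B m where s: "convex_split f A B m" using assms NCFD_iff_convex_split by blast
  show "fmeet f (fpt 1 1) v = f v"
  proof (cases "v \<in> {0..1}")
    case True
    have "A 1 = 1" using convex_splitD(1,6)[OF s] by auto
    then have "f 1 = B 1" using convex_splitD(3,5)[OF s] by auto
    then show ?thesis
      using fmeet_convex_split_eq[OF s convex_split_fpt_one True] convex_splitD(3-5)[OF s True]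
      by (auto simp: fpt_def max_def min_def)
  next
    case False
    then show ?thesis using convex_splitD(2)[OF s] unfolding fmeet_def by auto
  qed
qed

definition fle :: "fuzzy \<Rightarrow> fuzzy \<Rightarrow> bool" where
  "fle f g \<longleftrightarrow> (\<forall>v\<in>{0..1}. lenv g v \<le> lenv f v \<and> renv f v \<le> renv g v)"

lemma fle_refl: "fle f f"
  unfolding fle_def by simp

lemma fle_trans [trans]: "fle f g \<Longrightarrow> fle g h \<Longrightarrow> fle f h"
  unfolding fle_def by force

lemma fle_fmeet_left: "NCFD f \<Longrightarrow> NCFD g \<Longrightarrow> fle (fmeet f g) f"
  unfolding fle_def using envelopes_fmeet by simp

lemma fle_fjoin_left: "NCFD f \<Longrightarrow> NCFD g \<Longrightarrow> fle f (fjoin f g)"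
  unfolding fle_def using envelopes_fjoin by simp

lemma fle_fjoin_right: "NCFD f \<Longrightarrow> NCFD g \<Longrightarrow> fle g (fjoin f g)"
  unfolding fle_def using envelopes_fjoin by simp

lemma fjoin_fle: "NCFD f \<Longrightarrow> NCFD g \<Longrightarrow> fle f h \<Longrightarrow> fle g h \<Longrightarrow> fle (fjoin f g) h"
  unfolding fle_def using envelopes_fjoin by simp

lemma fle_fpt_one:
  assumes "NCFD f" shows "fle f (fpt 1 1)"
proof -
  obtain m where s: "convex_split f (lenv f) (renv f) m" using assms NCFD_convex_split_envelopes by blast
  have "lenv (fpt 1 1) v \<le> lenv f v \<and> renv f v \<le> renv (fpt 1 1) v" if v: "v \<in> {0..1}" for v
    using convex_split_lenv[OF convex_split_fpt_one v] convex_split_renv[OF convex_split_fpt_one v]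
      convex_splitD(1,4,5,6)[OF s] v by auto
  then show ?thesis unfolding fle_def by blast
qed

lemma fsub_if_fle:
  assumes "NCFD f" "NCFD g" "fle f g" shows "fsub f g"
proof -
  obtain p q where f: "convex_split f (lenv f) (renv f) p" and g: "convex_split g (lenv g) (renv g) q"
    using assms(1,2) NCFD_convex_split_envelopes by metis
  have "fmeet f g v = f v" for v
  proof (cases "v \<in> {0..1}")
    case True
    then have "lenv g v \<le> lenv f v" "renv f v \<le> renv g v" using assms(3) unfolding fle_def by auto
    then show ?thesis
      using convex_split_lenv[OF fmeet_convex_split[OF f g] True]
        convex_splitD(3)[OF fmeet_convex_split[OF f g] True] convex_splitD(3)[OF f True]
      by (simp add: max_absorb1 min_absorb1)
  next
    case False
    then show ?thesis using convex_splitD(2)[OF f] unfolding fmeet_def by auto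
  qed
  then show ?thesis unfolding fsub_def by auto
qed

lemma bigjoin_Suc: "0 < n \<Longrightarrow> bigjoin (Suc n) f = fjoin (bigjoin n f) (f n)"
  unfolding bigjoin_def by simp

lemma bigjoin_cong: "0 < n \<Longrightarrow> (\<And>y. y < n \<Longrightarrow> f y = g y) \<Longrightarrow> bigjoin n f = bigjoin n g"
  unfolding bigjoin_def by (intro foldl_cong) auto

lemma NCFD_bigjoin:
  assumes "0 < n" "\<And>y. y < n \<Longrightarrow> NCFD (f y)"
  shows "NCFD (bigjoin n f)"
  using assms by (induction n rule: nat_induct_non_zero) (auto simp: bigjoin_def bigjoin_Suc NCFD_fjoin)

lemma fle_bigjoin:
  assumes "y < n" "\<And>y. y < n \<Longrightarrow> NCFD (f y)"
  shows "fle (f y) (bigjoin n f)"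
proof -
  have "0 < n" using assms(1) by simp
  then show ?thesis using assms
  proof (induction n rule: nat_induct_non_zero)
    case 1
    then show ?case by (simp add: bigjoin_def fle_refl)
  next
    case (Suc n)
    have "NCFD (bigjoin n f)" using Suc by (intro NCFD_bigjoin) auto
    then show ?case
      using Suc fle_trans[OF _ fle_fjoin_left] fle_fjoin_right
      by (cases "y = n") (auto simp: bigjoin_Suc less_Suc_eq)
  qed
qed

lemma bigjoin_fle:
  assumes "0 < n" "\<And>y. y < n \<Longrightarrow> NCFD (f y)" "\<And>y. y < n \<Longrightarrow> fle (f y) h"
  shows "fle (bigjoin n f) h"
  using assms
proof (induction n rule: nat_induct_non_zero)
  case 1
  then show ?case by (simp add: bigjoin_def)
next
  case (Suc n)
  have "NCFD (bigjoin n f)" using Suc by (intro NCFD_bigjoin) auto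
  then show ?case using Suc by (simp add: bigjoin_Suc fjoin_fle)
qed

lemma NCFD_vecdot:
  assumes "0 < n" "\<And>y. y < n \<Longrightarrow> NCFD (x y)" "\<And>y. y < n \<Longrightarrow> NCFD (c y)"
  shows "NCFD (vecdot n x c)"
  unfolding vecdot_def using assms by (intro NCFD_bigjoin NCFD_fmeet)

lemma vecdot_fle_bigjoin:
  assumes "0 < n" "\<And>y. y < n \<Longrightarrow> NCFD (x y)" "\<And>y. y < n \<Longrightarrow> NCFD (c y)"
  shows "fle (vecdot n x c) (bigjoin n x)"
  unfolding vecdot_def
proof (rule bigjoin_fle)
  fix y assume y: "y < n"
  show "NCFD (fmeet (x y) (c y))" using assms y by (intro NCFD_fmeet)
  have "fle (fmeet (x y) (c y)) (x y)" using assms y by (intro fle_fmeet_left)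
  also have "fle (x y) (bigjoin n x)" using assms y by (intro fle_bigjoin)
  finally show "fle (fmeet (x y) (c y)) (bigjoin n x)" .
qed fact

lemma run_snoc: "run n x0 (s @ [\<sigma>]) = vecmat n (run n x0 s) \<sigma>"
  unfolding run_def by simp

lemma vecmat_eq_vecdot: "vecmat n x M = (\<lambda>z. vecdot n x (\<lambda>y. M y z))"
  unfolding vecmat_def vecdot_def ..

context
  fixes n Ev x0 xm
  assumes G: "bifuzzy_automaton n Ev x0 xm"
begin

lemma NCFD_run: "set s \<subseteq> Ev \<Longrightarrow> z < n \<Longrightarrow> NCFD (run n x0 s z)"
proof (induction s arbitrary: z rule: rev_induct)
  case Nil
  then show ?case using G unfolding bifuzzy_automaton_def run_def by simp
next
  case (snoc \<sigma> s)
  then show ?case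
    using G unfolding run_snoc vecmat_eq_vecdot bifuzzy_automaton_def by (intro NCFD_vecdot) auto
qed

lemma LG_eq_bigjoin_run: "set s \<subseteq> Ev \<Longrightarrow> s \<noteq> [] \<Longrightarrow> LG n x0 s = bigjoin n (run n x0 s)"
  using G unfolding LG_def vecdot_def bifuzzy_automaton_def
  by (auto intro!: bigjoin_cong simp: fmeet_fpt_one_right NCFD_run)

lemma NCFD_LG: "set s \<subseteq> Ev \<Longrightarrow> NCFD (LG n x0 s)"
  using G unfolding bifuzzy_automaton_def
  by (cases "s = []") (auto simp: LG_def NCFD_fpt_one NCFD_run intro!: NCFD_vecdot)

lemma NCFD_LGm: "set s \<subseteq> Ev \<Longrightarrow> NCFD (LGm n x0 xm s)"
  using G unfolding bifuzzy_automaton_def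
  by (cases "s = []") (auto simp: LGm_def NCFD_fpt_one NCFD_run intro!: NCFD_vecdot)

lemma LGm_fle_LG:
  assumes "set s \<subseteq> Ev" shows "fle (LGm n x0 xm s) (LG n x0 s)"
proof (cases "s = []")
  case True
  then show ?thesis by (simp add: LG_def LGm_def fle_refl)
next
  case False
  then show ?thesis
    using G assms unfolding LG_eq_bigjoin_run[OF assms False] LGm_def bifuzzy_automaton_def
    by (auto intro!: vecdot_fle_bigjoin NCFD_run)
qed

lemma LG_snoc_fle:
  assumes s: "set s \<subseteq> Ev" and \<sigma>: "\<sigma> \<in> Ev"
  shows "fle (LG n x0 (s @ [\<sigma>])) (LG n x0 s)"
proof (cases "s = []")
  case True
  then have "LG n x0 s = fpt 1 1" by (simp add: LG_def)
  then show ?thesis using fle_fpt_one[OF NCFD_LG] s \<sigma> by simp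
next
  case False
  have n: "0 < n" using G unfolding bifuzzy_automaton_def by simp
  have "LG n x0 (s @ [\<sigma>]) = bigjoin n (\<lambda>z. vecdot n (run n x0 s) (\<lambda>y. \<sigma> y z))"
    using s \<sigma> by (simp add: LG_eq_bigjoin_run run_snoc vecmat_eq_vecdot)
  moreover have "LG n x0 s = bigjoin n (run n x0 s)" using LG_eq_bigjoin_run[OF s False] .
  moreover have "fle (bigjoin n (\<lambda>z. vecdot n (run n x0 s) (\<lambda>y. \<sigma> y z))) (bigjoin n (run n x0 s))"
    using G s \<sigma> n unfolding bifuzzy_automaton_def
    by (auto intro!: bigjoin_fle NCFD_vecdot vecdot_fle_bigjoin NCFD_run)
  ultimately show ?thesis by simp
qed

end

theorem proposition2:
  fixes n :: nat and Ev :: "fmat set" and x0 xm :: fvec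
    and s :: "fmat list" and \<sigma> :: fmat
  assumes "bifuzzy_automaton n Ev x0 xm"
    and "set s \<subseteq> Ev" and "\<sigma> \<in> Ev"
  shows "fsub (LGm n x0 xm (s @ [\<sigma>])) (LG n x0 (s @ [\<sigma>])) \<and>
         fsub (LG n x0 (s @ [\<sigma>])) (LG n x0 s)"
proof
  note G = assms(1)
  have s\<sigma>: "set (s @ [\<sigma>]) \<subseteq> Ev" using assms(2,3) by simp
  show "fsub (LGm n x0 xm (s @ [\<sigma>])) (LG n x0 (s @ [\<sigma>]))"
    using fsub_if_fle[OF NCFD_LGm[OF G s\<sigma>] NCFD_LG[OF G s\<sigma>] LGm_fle_LG[OF G s\<sigma>]] .
  show "fsub (LG n x0 (s @ [\<sigma>])) (LG n x0 s)"
    using fsub_if_fle[OF NCFD_LG[OF G s\<sigma>] NCFD_LG[OF G assms(2)] LG_snoc_fle[OF G assms(2,3)]] .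
qed

end
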